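(* $\mathcal{E}_0\neq\mathcal{E}_1$ and $\mathcal{E}_1=\mathcal{E}_\infty$. Consequently $\mathcal{E}_d=\mathcal{E}_1$ for all $d\ge 1$.
   Context: Fix an infinite set $\mathcal{A}$ (of actions) and a finite non-empty set $T$ (of types). A typed temporal graph is a triple $(G,t,\tau)$ where $G$ is a directed graph with node set $\mathrm{nodes}(G)\subseteq\mathcal{A}$ and edge set $\mathrm{edges}(G)\subseteq\mathrm{nodes}(G)\times\mathrm{nodes}(G)$ (no rootedness or acyclicity assumed), $t\colon\mathrm{nodes}(G)\to\mathbb{R}$ and $\tau\colon\mathrm{nodes}(G)\to T$. Write $(G,t,\tau)\preceq(G',t',\tau')$ iff $\mathrm{nodes}(G)\subseteq\mathrm{nodes}(G')$, $\mathrm{edges}(G)\subseteq\mathrm{edges}(G')$, $t'|_{\mathrm{nodes}(G)}=t$ and $\tau'|_{\mathrm{nodes}(G)}=\tau$. Let $\mathcal{G}$ be the set of all finite sequences $(G_k)_{k=0}^n$ ($n\ge 0$) of typed temporal graphs $(G_k,t_k,\tau_k)$. A typed temporal graph is $\mathcal{A}$-trivial iff its node set is $\{r\}$ for some $r\in\mathcal{A}$ and it has no edges. Direct emission: $G'$ is obtained from $G$ by direct emissions iff $G\preceq G'$ and there exist a finite non-empty set $B\subseteq\mathcal{A}$ with $B\cap\mathrm{nodes}(G)=\emptyset$ and $p\in\mathrm{nodes}(G)$ such that $\mathrm{nodes}(G')=\mathrm{nodes}(G)\cup B$, $\mathrm{edges}(G')=\mathrm{edges}(G)\cup\{(p,b):b\in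 B\}$, and $t(p)<t'(b)$ for all $b\in B$. Invocation: for $\mathcal{E}\subseteq\mathcal{G}$, $G'$ is obtained from $G$ by $\mathcal{E}$-invocation iff there exist $p\in\mathrm{nodes}(G)$, a sequence $(H_i,t^H_i,\tau^H_i)_{i=0}^m\in\mathcal{E}$ with $\mathrm{nodes}(H_i)\cap\mathrm{nodes}(G)=\emptyset$ for all $i$, and a node $q_m\in\mathrm{nodes}(H_m)$ of in-degree zero in $H_m$, such that $\mathrm{nodes}(G')=\mathrm{nodes}(G)\cup\mathrm{nodes}(H_m)$, $\mathrm{edges}(G')=\mathrm{edges}(G)\cup\mathrm{edges}(H_m)\cup\{(p,q_m)\}$, $t'=t\sqcup t^H_m$, $\tau'=\tau\sqcup\tau^H_m$, and $t(p)<t^H_m(q_m)$ (here $f\sqcup g$ denotes the common extension of two maps with disjoint domains). Define $\varphi(\mathcal{E})$, for $\mathcal{E}\subseteq\mathcal{G}$, as the set of all $(G_k)_{k=0}^n\in\mathcal{G}$ such that $G_0$ is $\mathcal{A}$-trivial and, for each $0\le k<n$, $G_{k+1}$ is obtained from $G_k$ either by direct emissions or by $\mathcal{E}$-invocation. Define $\mathcal{E}_0=\varphi(\emptyset)$, $\mathcal{E}_{d+1}=\varphi(\mathcal{E}_d)$ for $d\in\mathbb{N}$, and $\mathcal{E}_\infty=\bigcup_{d\in\mathbb{N}}\mathcal{E}_d$. *)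

theory Defs
  imports Complex_Main
begin

text \<open>The timing and typing maps are total HOL functions; to represent maps defined
  only on the node set, well-formed graphs are required to be extensional
  (value undefined outside the node set), so that each mathematical graph has
  a unique representation.\<close>

record ('a, 't) tgraph =
  nodes :: "'a set"
  edges :: "('a \<times> 'a) set"
  ttime :: "'a \<Rightarrow> real"
  ttype :: "'a \<Rightarrow> 't"

definition wf_tg :: "('a, 't) tgraph \<Rightarrow> bool" where
  "wf_tg G \<longleftrightarrow> edges G \<subseteq> nodes G \<times> nodes G
     \<and> (\<forall>x. x \<notin> nodes G \<longrightarrow> ttime G x = undefined \<and> ttype G x = undefined)"

definition tg_le :: "('a, 't) tgraph \<Rightarrow> ('a, 't) tgraph \<Rightarrow> bool" where
  "tg_le G G' \<longleftrightarrow> nodes G \<subseteq> nodes G' \<and> edges G \<subseteq> edges G'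
     \<and> (\<forall>x\<in>nodes G. ttime G' x = ttime G x \<and> ttype G' x = ttype G x)"

definition GG :: "('a, 't) tgraph list set" where
  "GG = {Gs. Gs \<noteq> [] \<and> (\<forall>G\<in>set Gs. wf_tg G)}"

definition trivial_tg :: "('a, 't) tgraph \<Rightarrow> bool" where
  "trivial_tg G \<longleftrightarrow> (\<exists>r. nodes G = {r} \<and> edges G = {})"

definition direct_emission :: "('a, 't) tgraph \<Rightarrow> ('a, 't) tgraph \<Rightarrow> bool" where
  "direct_emission G G' \<longleftrightarrow> tg_le G G' \<and>
     (\<exists>B p. finite B \<and> B \<noteq> {} \<and> B \<inter> nodes G = {} \<and> p \<in> nodes G
        \<and> nodes G' = nodes G \<union> B
        \<and> edges G' = edges G \<union> {(p, b) | b. b \<in> B}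
        \<and> (\<forall>b\<in>B. ttime G p < ttime G' b))"

definition invocation ::
  "('a, 't) tgraph list set \<Rightarrow> ('a, 't) tgraph \<Rightarrow> ('a, 't) tgraph \<Rightarrow> bool" where
  "invocation E G G' \<longleftrightarrow>
     (\<exists>p Hs q. p \<in> nodes G \<and> Hs \<in> E
        \<and> (\<forall>H\<in>set Hs. nodes H \<inter> nodes G = {})
        \<and> q \<in> nodes (last Hs) \<and> (\<forall>x. (x, q) \<notin> edges (last Hs))
        \<and> nodes G' = nodes G \<union> nodes (last Hs)
        \<and> edges G' = edges G \<union> edges (last Hs) \<union> {(p, q)}
        \<and> ttime G' = (\<lambda>x. if x \<in> nodes G then ttime G x else ttime (last Hs) x)
        \<and> ttype G' = (\<lambda>x. if x \<in> nodes G then ttype G x else ttype (last Hs) x)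
        \<and> ttime G p < ttime (last Hs) q)"

definition phi :: "('a, 't) tgraph list set \<Rightarrow> ('a, 't) tgraph list set" where
  "phi E = {Gs \<in> GG. trivial_tg (hd Gs) \<and>
     (\<forall>k. Suc k < length Gs \<longrightarrow>
        direct_emission (Gs ! k) (Gs ! Suc k) \<or> invocation E (Gs ! k) (Gs ! Suc k))}"

text \<open>E_d: E_0 = phi {}, E_{d+1} = phi E_d.\<close>
definition Ed :: "nat \<Rightarrow> ('a, 't) tgraph list set" where
  "Ed d = (phi ^^ Suc d) {}"

definition Einf :: "('a, 't) tgraph list set" where
  "Einf = (\<Union>d. Ed d)"

end

(*
  An E_0-run performs direct emissions only, so its final graph is a tree whose
  root, the node of the trivial initial graph, is its only node without an
  incoming edge.  An E_0-invocation therefore attaches such a tree to the caller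
  by an edge p -> q into its root, and this can be replayed by direct emissions
  alone: first emit q from p, then repeat the callee's emissions.  Hence every
  final graph of an E_1-run is the final graph of an E_0-run, so E_1-invocations
  reduce to E_0-invocations and phi E_1 = E_1.  Conversely, invoking the E_0-run
  {b} -> {b -> c} from a single node a produces the path a -> b -> c in one step,
  which no direct emission can do, so E_0 /= E_1.
*)
theory Submission
  imports Defs
begin

lemma tg_le_refl: "tg_le G G"
  by (simp add: tg_le_def)

lemma tg_le_trans: "tg_le G H \<Longrightarrow> tg_le H K \<Longrightarrow> tg_le G K"
  unfolding tg_le_def by (metis subsetD subset_trans)

lemma direct_emission_tg_le: "direct_emission G G' \<Longrightarrow> tg_le G G'"
  by (simp add: direct_emission_def)

lemma invocation_tg_le: "invocation E G G' \<Longrightarrow> tg_le G G'"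
  unfolding invocation_def tg_le_def by auto

lemma not_invocation_empty: "\<not> invocation {} G G'"
  by (simp add: invocation_def)

lemma invocation_mono: "E \<subseteq> E' \<Longrightarrow> invocation E G G' \<Longrightarrow> invocation E' G G'"
  unfolding invocation_def by blast

lemma phi_mono_invocation:
  "(\<And>G G'. invocation E G G' \<Longrightarrow> invocation E' G G') \<Longrightarrow> phi E \<subseteq> phi E'"
  unfolding phi_def by blast

lemma phi_mono: "E \<subseteq> E' \<Longrightarrow> phi E \<subseteq> phi E'"
  by (rule phi_mono_invocation) (rule invocation_mono)

lemma phi_not_Nil: "Gs \<in> phi E \<Longrightarrow> Gs \<noteq> []"
  unfolding phi_def GG_def by blast

lemma singleton_in_phi_iff: "[G] \<in> phi E \<longleftrightarrow> wf_tg G \<and> trivial_tg G"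
  by (simp add: phi_def GG_def)

lemma snoc_in_phi_iff:
  assumes "Gs \<noteq> []"
  shows "Gs @ [G] \<in> phi E \<longleftrightarrow> Gs \<in> phi E \<and> wf_tg G
           \<and> (direct_emission (last Gs) G \<or> invocation E (last Gs) G)"
proof -
  define step where "step Hs k \<longleftrightarrow>
    direct_emission (Hs ! k) (Hs ! Suc k) \<or> invocation E (Hs ! k) (Hs ! Suc k)" for Hs k
  have in_phi: "Hs \<in> phi E \<longleftrightarrow> Hs \<in> GG \<and> trivial_tg (hd Hs)
      \<and> (\<forall>k. Suc k < length Hs \<longrightarrow> step Hs k)" for Hs
    unfolding phi_def step_def by blast
  have split_last: "(\<forall>k. Suc k < Suc n \<longrightarrow> P k) \<longleftrightarrow> (\<forall>k. Suc k < n \<longrightarrow> P k) \<and> P (n - 1)"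
    if "n > 0" for n and P :: "nat \<Rightarrow> bool"
    using that by (cases n) (auto simp: less_Suc_eq)
  have "step (Gs @ [G]) k = step Gs k" if "Suc k < length Gs" for k
    using that by (simp add: step_def nth_append)
  moreover have "step (Gs @ [G]) (length Gs - 1) \<longleftrightarrow>
      direct_emission (last Gs) G \<or> invocation E (last Gs) G"
    using assms by (simp add: step_def nth_append last_conv_nth)
  ultimately have steps: "(\<forall>k. Suc k < length (Gs @ [G]) \<longrightarrow> step (Gs @ [G]) k)
        \<longleftrightarrow> (\<forall>k. Suc k < length Gs \<longrightarrow> step Gs k)
           \<and> (direct_emission (last Gs) G \<or> invocation E (last Gs) G)"
    using split_last[of "length Gs" "step (Gs @ [G])"] assms by simp
  have "Gs @ [G] \<in> GG \<longleftrightarrow> Gs \<in> GG \<and> wf_tg G"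
    using assms by (auto simp: GG_def)
  then show ?thesis
    unfolding in_phi[of "Gs @ [G]"] in_phi[of Gs] hd_append2[OF assms] steps by blast
qed

lemma phi_induct [consumes 1, case_names single snoc]:
  assumes "Gs \<in> phi E"
    and "\<And>G. wf_tg G \<Longrightarrow> trivial_tg G \<Longrightarrow> P [G]"
    and "\<And>Gs G. Gs \<in> phi E \<Longrightarrow> P Gs \<Longrightarrow> wf_tg G
                 \<Longrightarrow> direct_emission (last Gs) G \<or> invocation E (last Gs) G \<Longrightarrow> P (Gs @ [G])"
  shows "P Gs"
  using assms(1)
proof (induction Gs rule: rev_induct)
  case Nil
  then show ?case using phi_not_Nil by blast
next
  case (snoc G Gs)
  show ?case
  proof (cases "Gs = []")
    case True
    then show ?thesis
      using snoc.prems assms(2) by (simp add: singleton_in_phi_iff)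
  next
    case False
    with snoc.prems have "Gs \<in> phi E" "wf_tg G"
      "direct_emission (last Gs) G \<or> invocation E (last Gs) G"
      by (simp_all add: snoc_in_phi_iff)
    then show ?thesis
      using snoc.IH assms(3) by blast
  qed
qed

lemma phi_tg_le_last:
  assumes "Gs \<in> phi E" "H \<in> set Gs"
  shows "tg_le H (last Gs)"
  using assms
proof (induction Gs rule: phi_induct)
  case (single G)
  then show ?case by (simp add: tg_le_refl)
next
  case (snoc Gs G)
  have "tg_le (last Gs) G"
    using snoc.hyps(3) direct_emission_tg_le invocation_tg_le by blast
  then show ?case
    using snoc.prems snoc.IH tg_le_trans by (auto simp: tg_le_refl)
qed

lemma phi_nodes_subset_last:
  assumes "Gs \<in> phi E" "H \<in> set Gs"
  shows "nodes H \<subseteq> nodes (last Gs)"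
  using phi_tg_le_last[OF assms] by (simp add: tg_le_def)

lemma phi_empty_non_root_has_in_edge:
  assumes "Gs \<in> phi {}" "nodes (hd Gs) = {r}"
    and "x \<in> nodes (last Gs)" "x \<noteq> r"
  shows "\<exists>y. (y, x) \<in> edges (last Gs)"
  using assms
proof (induction Gs arbitrary: x rule: phi_induct)
  case (single G)
  then show ?case by simp
next
  case (snoc Gs G)
  have "direct_emission (last Gs) G"
    using snoc.hyps(3) not_invocation_empty by blast
  then obtain B p where nodes: "nodes G = nodes (last Gs) \<union> B"
    and edges: "edges G = edges (last Gs) \<union> {(p, b) | b. b \<in> B}"
    unfolding direct_emission_def by blast
  have root: "nodes (hd Gs) = {r}"
    using snoc.prems(1) phi_not_Nil[OF snoc.hyps(1)] by simp
  show ?case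
  proof (cases "x \<in> B")
    case True
    then show ?thesis using edges by auto
  next
    case False
    then have "x \<in> nodes (last Gs)"
      using nodes snoc.prems(2) by simp
    then obtain y where "(y, x) \<in> edges (last Gs)"
      using snoc.IH root snoc.prems(3) by blast
    then show ?thesis using edges by auto
  qed
qed

definition attach :: "('a, 't) tgraph \<Rightarrow> 'a \<Rightarrow> 'a \<Rightarrow> ('a, 't) tgraph \<Rightarrow> ('a, 't) tgraph" where
  "attach G p q K =
     \<lparr>nodes = nodes G \<union> nodes K, edges = edges G \<union> edges K \<union> {(p, q)},
      ttime = (\<lambda>x. if x \<in> nodes G then ttime G x else ttime K x),
      ttype = (\<lambda>x. if x \<in> nodes G then ttype G x else ttype K x)\<rparr>"

lemma eq_attach_iff:
  "G' = attach G p q K \<longleftrightarrow>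
     nodes G' = nodes G \<union> nodes K \<and> edges G' = edges G \<union> edges K \<union> {(p, q)}
     \<and> ttime G' = (\<lambda>x. if x \<in> nodes G then ttime G x else ttime K x)
     \<and> ttype G' = (\<lambda>x. if x \<in> nodes G then ttype G x else ttype K x)"
  by (cases G') (auto simp: attach_def)

lemma invocation_iff_attach:
  "invocation E G G' \<longleftrightarrow>
     (\<exists>p Hs q. p \<in> nodes G \<and> Hs \<in> E \<and> (\<forall>H\<in>set Hs. nodes H \<inter> nodes G = {})
        \<and> q \<in> nodes (last Hs) \<and> (\<forall>x. (x, q) \<notin> edges (last Hs))
        \<and> G' = attach G p q (last Hs) \<and> ttime G p < ttime (last Hs) q)"
  by (simp only: invocation_def eq_attach_iff conj_assoc)

lemma wf_tg_attach:
  "wf_tg G \<Longrightarrow> wf_tg K \<Longrightarrow> p \<in> nodes G \<Longrightarrow> q \<in> nodes K \<Longrightarrow> wf_tg (attach G p q K)"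
  unfolding wf_tg_def attach_def by auto

lemma direct_emission_attach_singleton:
  assumes "nodes K = {q}" "edges K = {}" "q \<notin> nodes G" "p \<in> nodes G"
    and "ttime G p < ttime K q"
  shows "direct_emission G (attach G p q K)"
  unfolding direct_emission_def
proof (intro conjI exI)
  show "tg_le G (attach G p q K)"
    by (auto simp: tg_le_def attach_def)
  show "edges (attach G p q K) = edges G \<union> {(p, b) | b. b \<in> {q}}"
    using assms(2) by (simp add: attach_def)
qed (use assms in \<open>auto simp: attach_def\<close>)

lemma direct_emission_attach:
  assumes "direct_emission K K'" "nodes K' \<inter> nodes G = {}"
  shows "direct_emission (attach G p q K) (attach G p q K')"
proof -
  obtain B p' where B: "finite B" "B \<noteq> {}" "B \<inter> nodes K = {}" "p' \<in> nodes K"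
      "nodes K' = nodes K \<union> B" "edges K' = edges K \<union> {(p', b) | b. b \<in> B}"
      "\<forall>b\<in>B. ttime K p' < ttime K' b"
    and "tg_le K K'"
    using assms(1) unfolding direct_emission_def by blast
  then show ?thesis
    using assms(2) unfolding direct_emission_def
    by (intro conjI exI[of _ B] exI[of _ p']) (auto simp: attach_def tg_le_def)
qed

lemma phi_empty_append_attach:
  assumes Hs: "Hs \<in> phi {}" and Ks: "Ks \<in> phi {}"
    and "nodes (hd Ks) = {q}" "p \<in> nodes (last Hs)" "ttime (last Hs) p < ttime (hd Ks) q"
    and "\<forall>K\<in>set Ks. nodes K \<inter> nodes (last Hs) = {}"
  shows "Hs @ map (attach (last Hs) p q) Ks \<in> phi {}"
  using Ks assms(3-)
proof (induction Ks rule: phi_induct)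
  case (single K)
  have "edges K = {}"
    using single.hyps(2) by (auto simp: trivial_tg_def)
  then have "direct_emission (last Hs) (attach (last Hs) p q K)"
    using single by (intro direct_emission_attach_singleton) auto
  moreover have "wf_tg (attach (last Hs) p q K)"
    using single Hs by (intro wf_tg_attach) (auto simp: phi_def GG_def)
  ultimately show ?case
    using Hs phi_not_Nil[OF Hs] by (simp add: snoc_in_phi_iff)
next
  case (snoc Ks K)
  have Ks_ne: "Ks \<noteq> []"
    using snoc.hyps(1) by (rule phi_not_Nil)
  then have IH: "Hs @ map (attach (last Hs) p q) Ks \<in> phi {}"
    using snoc.IH snoc.prems by simp
  have step: "direct_emission (last Ks) K"
    using snoc.hyps(3) not_invocation_empty by blast
  have "q \<in> nodes (last Ks)"
    using snoc.prems(1) phi_nodes_subset_last[OF snoc.hyps(1) hd_in_set[OF Ks_ne]] Ks_ne by simp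
  then have "q \<in> nodes K"
    using direct_emission_tg_le[OF step] by (auto simp: tg_le_def)
  then have "wf_tg (attach (last Hs) p q K)"
    using snoc.hyps(2) Hs snoc.prems(2) by (intro wf_tg_attach) (auto simp: phi_def GG_def)
  moreover have "direct_emission (attach (last Hs) p q (last Ks)) (attach (last Hs) p q K)"
    using step snoc.prems(4) by (intro direct_emission_attach) auto
  ultimately have "(Hs @ map (attach (last Hs) p q) Ks) @ [attach (last Hs) p q K] \<in> phi {}"
    using IH Ks_ne by (subst snoc_in_phi_iff) (simp_all add: last_map)
  then show ?case by simp
qed

lemma phi_empty_simulates_invocation:
  assumes Hs: "Hs \<in> phi {}" and "invocation (phi {}) (last Hs) G"
  shows "\<exists>Hs'\<in>phi {}. last Hs' = G"
proof -
  obtain p Ks q where p: "p \<in> nodes (last Hs)" and Ks: "Ks \<in> phi {}"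
    and disjoint: "\<forall>K\<in>set Ks. nodes K \<inter> nodes (last Hs) = {}"
    and q: "q \<in> nodes (last Ks)" "\<forall>x. (x, q) \<notin> edges (last Ks)"
    and G: "G = attach (last Hs) p q (last Ks)"
    and time: "ttime (last Hs) p < ttime (last Ks) q"
    using assms(2) unfolding invocation_iff_attach by blast
  obtain r where r: "nodes (hd Ks) = {r}"
    using Ks by (auto simp: phi_def trivial_tg_def)
  have "q = r"
    using phi_empty_non_root_has_in_edge[OF Ks r q(1)] q(2) by blast
  with r have hd_Ks: "nodes (hd Ks) = {q}" by simp
  have Ks_ne: "Ks \<noteq> []"
    using Ks by (rule phi_not_Nil)
  have "ttime (last Ks) q = ttime (hd Ks) q"
    using phi_tg_le_last[OF Ks hd_in_set[OF Ks_ne]] hd_Ks by (simp add: tg_le_def)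
  then have "Hs @ map (attach (last Hs) p q) Ks \<in> phi {}"
    using Hs Ks hd_Ks p time disjoint by (intro phi_empty_append_attach) auto
  moreover have "last (Hs @ map (attach (last Hs) p q) Ks) = G"
    using Ks_ne G by (simp add: last_map)
  ultimately show ?thesis by blast
qed

lemma phi_phi_empty_last_in_phi_empty:
  "Gs \<in> phi (phi {}) \<Longrightarrow> \<exists>Hs\<in>phi {}. last Hs = last Gs"
proof (induction Gs rule: phi_induct)
  case (single G)
  then show ?case by (intro bexI[of _ "[G]"]) (simp_all add: singleton_in_phi_iff)
next
  case (snoc Gs G)
  then obtain Hs where Hs: "Hs \<in> phi {}" "last Hs = last Gs" by blast
  from snoc.hyps(3) show ?case
  proof
    assume "direct_emission (last Gs) G"
    then have "Hs @ [G] \<in> phi {}"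
      using Hs phi_not_Nil[OF Hs(1)] snoc.hyps(2) by (simp add: snoc_in_phi_iff)
    then show ?thesis by force
  next
    assume "invocation (phi {}) (last Gs) G"
    then show ?thesis
      using phi_empty_simulates_invocation[OF Hs(1)] Hs(2) by simp
  qed
qed

lemma invocation_phi_mono_last:
  assumes "\<And>Gs. Gs \<in> phi E \<Longrightarrow> \<exists>Hs\<in>phi E'. last Hs = last Gs"
    and "invocation (phi E) G G'"
  shows "invocation (phi E') G G'"
proof -
  obtain p Gs q where p: "p \<in> nodes G" and Gs: "Gs \<in> phi E"
    and disjoint: "\<forall>H\<in>set Gs. nodes H \<inter> nodes G = {}"
    and q: "q \<in> nodes (last Gs)" "\<forall>x. (x, q) \<notin> edges (last Gs)"
    and G': "G' = attach G p q (last Gs)" and time: "ttime G p < ttime (last Gs) q"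
    using assms(2) unfolding invocation_iff_attach by blast
  obtain Hs where Hs: "Hs \<in> phi E'" and last_Hs: "last Hs = last Gs"
    using assms(1)[OF Gs] by blast
  have "nodes (last Gs) \<inter> nodes G = {}"
    using disjoint last_in_set[OF phi_not_Nil[OF Gs]] by blast
  then have "\<forall>H\<in>set Hs. nodes H \<inter> nodes G = {}"
    using phi_nodes_subset_last[OF Hs] unfolding last_Hs by blast
  then show ?thesis
    unfolding invocation_iff_attach last_Hs[symmetric] using p Hs q G' time
    by (intro exI[of _ p] exI[of _ Hs] exI[of _ q]) (simp add: last_Hs)
qed

lemma phi_phi_phi_empty_eq: "phi (phi (phi {})) = phi (phi {})"
proof
  show "phi (phi (phi {})) \<subseteq> phi (phi {})"
    by (rule phi_mono_invocation, rule invocation_phi_mono_last, erule phi_phi_empty_last_in_phi_empty, assumption)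
  show "phi (phi {}) \<subseteq> phi (phi (phi {}))"
    by (intro phi_mono empty_subsetI)
qed

lemma phi_empty_ne_phi_phi_empty:
  assumes "infinite (UNIV :: 'a set)"
  shows "(phi {} :: ('a, 't) tgraph list set) \<noteq> phi (phi {})"
proof -
  obtain A :: "'a set" where "finite A" "card A = 3"
    using infinite_arbitrarily_large[OF assms] by blast
  then obtain a b c :: 'a where distinct: "a \<noteq> b" "b \<noteq> c" "a \<noteq> c"
    unfolding card_3_iff by blast
  define time :: "'a \<Rightarrow> real" where "time x = (if x = a then 0 else if x = b then 1 else 2)" for x
  define tg :: "'a set \<Rightarrow> ('a \<times> 'a) set \<Rightarrow> ('a, 't) tgraph" where
    "tg S E = \<lparr>nodes = S, edges = E, ttime = \<lambda>x. if x \<in> S then time x else undefined,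
                ttype = \<lambda>x. undefined\<rparr>" for S E
  have wf: "wf_tg (tg S E)" if "E \<subseteq> S \<times> S" for S E
    using that by (simp add: wf_tg_def tg_def)
  have trivial: "trivial_tg (tg {x} {})" for x
    by (simp add: trivial_tg_def tg_def)
  have "direct_emission (tg {b} {}) (tg {b, c} {(b, c)})"
    unfolding direct_emission_def
    using distinct by (intro conjI exI[of _ "{c}"] exI[of _ b]) (auto simp: tg_le_def tg_def time_def)
  then have callee: "[tg {b} {}, tg {b, c} {(b, c)}] \<in> phi {}"
    using snoc_in_phi_iff[of "[tg {b} {}]"] wf trivial by (simp add: singleton_in_phi_iff)
  have "tg {a, b, c} {(a, b), (b, c)} = attach (tg {a} {}) a b (tg {b, c} {(b, c)})"
    unfolding eq_attach_iff by (auto simp: tg_def)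
  then have "invocation (phi {}) (tg {a} {}) (tg {a, b, c} {(a, b), (b, c)})"
    unfolding invocation_iff_attach using callee distinct
    by (intro exI[of _ a] exI[of _ "[tg {b} {}, tg {b, c} {(b, c)}]"] exI[of _ b]) (auto simp: tg_def time_def)
  then have run: "[tg {a} {}, tg {a, b, c} {(a, b), (b, c)}] \<in> phi (phi {})"
    using snoc_in_phi_iff[of "[tg {a} {}]"] wf trivial by (simp add: singleton_in_phi_iff)
  have "\<not> direct_emission (tg {a} {}) (tg {a, b, c} {(a, b), (b, c)})"
  proof
    assume "direct_emission (tg {a} {}) (tg {a, b, c} {(a, b), (b, c)})"
    then obtain B p where "p \<in> {a}" and edges: "{(a, b), (b, c)} = {(p, x) | x. x \<in> B}"
      unfolding direct_emission_def by (auto simp: tg_def)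
    moreover have "(b, c) \<in> {(p, x) | x. x \<in> B}"
      unfolding edges[symmetric] by simp
    ultimately show False
      using distinct by simp
  qed
  then have "[tg {a} {}, tg {a, b, c} {(a, b), (b, c)}] \<notin> phi {}"
    by (simp add: snoc_in_phi_iff[of "[tg {a} {}]", simplified] not_invocation_empty)
  with run show ?thesis by blast
qed

lemma Ed_0: "Ed 0 = phi {}"
  by (simp add: Ed_def)

lemma Ed_Suc: "Ed (Suc d) = phi (Ed d)"
  by (simp add: Ed_def)

lemma Ed_1: "Ed 1 = phi (phi {})"
  by (simp add: Ed_def)

lemma Ed_Suc_eq_Ed_1: "Ed (Suc d) = Ed 1"
proof (induction d)
  case (Suc d)
  show ?case
    by (simp only: Ed_Suc[of "Suc d"] Suc.IH Ed_1 phi_phi_phi_empty_eq)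
qed simp

lemma Ed_eq_Ed_1: "d \<ge> 1 \<Longrightarrow> Ed d = Ed 1"
  using Ed_Suc_eq_Ed_1 by (cases d) auto

lemma Einf_eq_Ed_1: "(Einf :: ('a, 't) tgraph list set) = Ed 1"
proof -
  have "(Ed d :: ('a, 't) tgraph list set) \<subseteq> Ed 1" for d
  proof (cases d)
    case 0
    show ?thesis
      unfolding 0 Ed_0 Ed_1 by (rule phi_mono) simp
  next
    case (Suc n)
    show ?thesis
      unfolding Suc Ed_Suc_eq_Ed_1 by (rule subset_refl)
  qed
  then show ?thesis
    unfolding Einf_def by (intro subset_antisym UN_least UN_upper) auto
qed

theorem mainTheorem7:
  assumes "infinite (UNIV :: 'a set)"
  shows "(Ed 0 :: ('a, 't::finite) tgraph list set) \<noteq> Ed 1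
         \<and> (Ed 1 :: ('a, 't::finite) tgraph list set) = Einf
         \<and> (\<forall>d\<ge>1. (Ed d :: ('a, 't::finite) tgraph list set) = Ed 1)"
proof (intro conjI)
  show "(Ed 0 :: ('a, 't) tgraph list set) \<noteq> Ed 1"
    unfolding Ed_0 Ed_1 by (rule phi_empty_ne_phi_phi_empty[OF assms])
  show "(Ed 1 :: ('a, 't) tgraph list set) = Einf"
    by (rule Einf_eq_Ed_1[symmetric])
  show "\<forall>d\<ge>1. (Ed d :: ('a, 't) tgraph list set) = Ed 1"
    using Ed_eq_Ed_1 by blast
qed

end
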